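(* Let $\mathrm{M}=\langle e_1+I,\ e_2+I,\ A\rangle$, where $e_1,e_2$ are the standard basis vectors of $E^2$ and $A=\mathrm{diag}(1,-1)$. Then $$N_A(\mathrm{M})=\{b+B : 2b_2\in\mathbb Z \text{ and } B\in\langle -I, A\rangle\},$$ where $b=(b_1,b_2)$.
   Context: Affine maps of $E^2$ are written $b+B$ (meaning $x\mapsto b+Bx$, $b\in E^2$, $B\in\mathrm{GL}(2,\mathbb R)$); $b+I$ is translation by $b$. $N_A(\mathrm{M})$ denotes the normalizer of $\mathrm{M}$ in the group of affine transformations of $E^2$. (Here $E^2/\mathrm{M}$ is an annulus.) *)

theory Defs
  imports "HOL-Analysis.Analysis"
begin

text \<open>Affine maps of E^2 (modelled as real^2): b + B means x \<mapsto> b + B x.\<close>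
definition aff :: "real^2 \<Rightarrow> real^2^2 \<Rightarrow> (real^2 \<Rightarrow> real^2)" where
  "aff b B = (\<lambda>x. b + B *v x)"

definition Aff2 :: "(real^2 \<Rightarrow> real^2) set" where
  "Aff2 = {aff b B | b B. invertible B}"

inductive_set gen_maps :: "(real^2 \<Rightarrow> real^2) set \<Rightarrow> (real^2 \<Rightarrow> real^2) set"
  for S where
  gen_id: "id \<in> gen_maps S"
| gen_base: "g \<in> S \<Longrightarrow> g \<in> gen_maps S"
| gen_comp: "g \<in> gen_maps S \<Longrightarrow> h \<in> gen_maps S \<Longrightarrow> g \<circ> h \<in> gen_maps S"
| gen_inv: "g \<in> gen_maps S \<Longrightarrow> inv g \<in> gen_maps S"

inductive_set gen_mats :: "(real^2^2) set \<Rightarrow> (real^2^2) set"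
  for S where
  genm_id: "mat 1 \<in> gen_mats S"
| genm_base: "B \<in> S \<Longrightarrow> B \<in> gen_mats S"
| genm_mult: "B \<in> gen_mats S \<Longrightarrow> C \<in> gen_mats S \<Longrightarrow> B ** C \<in> gen_mats S"
| genm_inv: "B \<in> gen_mats S \<Longrightarrow> matrix_inv B \<in> gen_mats S"

definition affine_normalizer :: "(real^2 \<Rightarrow> real^2) set \<Rightarrow> (real^2 \<Rightarrow> real^2) set" where
  "affine_normalizer G = {g \<in> Aff2. (\<lambda>m. g \<circ> m \<circ> inv g) ` G = G}"

definition e1 :: "real^2" where "e1 = axis 1 1"
definition e2 :: "real^2" where "e2 = axis 2 1"

definition Amat :: "real^2^2" where
  "Amat = (\<chi> i j. if i = j then (if i = 1 then 1 else -1) else 0)"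

definition Mgrp :: "(real^2 \<Rightarrow> real^2) set" where
  "Mgrp = gen_maps {aff e1 (mat 1), aff e2 (mat 1), aff 0 Amat}"

end

theory Submission imports Defs begin

text \<open>Every element of M has the form (x1, x2) \<mapsto> (x1 + m, s x2 + n) with m, n integers and
  s = \<plusminus>1. For a bijection g, the equation g M g\<inverse> = M says that every g \<circ> f with f in M
  equals some f' \<circ> g with f' in M and vice versa; for g = b + B these identities can be read off
  coefficientwise. Taking f = A forces B 1 2 = 0, so B 2 2 \<noteq> 0 by invertibility, so f' is again
  a reflection; this forces B 2 1 = 0 and f' = A + (0, 2 b 2), whence 2 b 2 is an integer. Taking
  f or f' to be a unit translation shows that the diagonal entries of B are integers with integer
  inverses. Conversely, b + diag(p, q) with p, q = \<plusminus>1 intertwines (m, n, s) with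
  (p m, q n + (1 - s) b 2, s).\<close>

lemma matrix_inv_unique:
  fixes A :: "'a::semiring_1^'n^'n"
  assumes AB: "A ** B = mat 1" and BA: "B ** A = mat 1"
  shows "matrix_inv A = B"
proof -
  let ?inverse = "\<lambda>A'. A ** A' = mat 1 \<and> A' ** A = mat 1"
  have "?inverse (matrix_inv A)"
    unfolding matrix_inv_def by (rule someI[of ?inverse B]) (use AB BA in simp)
  have "matrix_inv A = matrix_inv A ** (A ** B)"
    by (simp add: AB)
  also have "\<dots> = (matrix_inv A ** A) ** B"
    by (rule matrix_mul_assoc)
  also have "\<dots> = B"
    using \<open>?inverse (matrix_inv A)\<close> by simp
  finally show ?thesis .
qed

lemma Ints_mult_eq_1:
  fixes x y :: "'a::ring_char_0"
  assumes "x \<in> \<int>" "y \<in> \<int>" "x * y = 1"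
  shows "x \<in> {1, -1}"
proof -
  obtain i j where ij: "x = of_int i" "y = of_int j"
    using assms(1,2) Ints_cases by metis
  then have "i * j = 1"
    using assms(3) by (metis of_int_1 of_int_eq_iff of_int_mult)
  then show ?thesis
    using ij zmult_eq_1_iff by auto
qed

lemma gen_maps_subset:
  assumes "S \<subseteq> G" "id \<in> G"
    and "\<And>g h. g \<in> G \<Longrightarrow> h \<in> G \<Longrightarrow> g \<circ> h \<in> G" and "\<And>g. g \<in> G \<Longrightarrow> inv g \<in> G"
  shows "gen_maps S \<subseteq> G"
proof
  fix g assume "g \<in> gen_maps S"
  then show "g \<in> G"
    by induction (use assms in blast)+
qed

lemma gen_mats_subset:
  assumes "S \<subseteq> G" "mat 1 \<in> G"
    and "\<And>B C. B \<in> G \<Longrightarrow> C \<in> G \<Longrightarrow> B ** C \<in> G" and "\<And>B. B \<in> G \<Longrightarrow> matrix_inv B \<in> G"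
  shows "gen_mats S \<subseteq> G"
proof
  fix B assume "B \<in> gen_mats S"
  then show "B \<in> G"
    by induction (use assms in auto)
qed

lemma one_parameter_in_gen_maps:
  fixes t :: "'a::ring_1 \<Rightarrow> real^2 \<Rightarrow> real^2"
  assumes t0: "t 0 = id" and t_add: "\<And>a b. t (a + b) = t a \<circ> t b" and t1: "t 1 \<in> gen_maps S"
  shows "t (of_int k) \<in> gen_maps S"
proof -
  have t_nat: "t (of_nat n) \<in> gen_maps S" for n
  proof (induction n)
    case 0
    show ?case
      by (simp only: of_nat_0 t0 gen_maps.gen_id)
  next
    case (Suc n)
    have "t (of_nat (Suc n)) = t 1 \<circ> t (of_nat n)"
      by (simp flip: t_add)
    then show ?case
      using t1 Suc gen_maps.gen_comp by metis
  qed
  have t_minus: "t (- a) = inv (t a)" for a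
    by (rule inv_unique_comp[symmetric]) (simp_all add: t0 flip: t_add)
  show ?thesis
  proof (cases "k \<ge> 0")
    case True
    then show ?thesis using t_nat[of "nat k"] by simp
  next
    case False
    then show ?thesis
      using t_nat[of "nat (- k)"] t_minus[of "of_nat (nat (- k))"] gen_maps.gen_inv by simp
  qed
qed

lemma conj_image_eq_iff_intertwining:
  assumes "bij g"
  shows "(\<lambda>f. g \<circ> f \<circ> inv g) ` G = G \<longleftrightarrow>
    (\<forall>f\<in>G. \<exists>f'\<in>G. g \<circ> f = f' \<circ> g) \<and> (\<forall>f'\<in>G. \<exists>f\<in>G. g \<circ> f = f' \<circ> g)"
proof -
  have inv_g: "inv g \<circ> g = id" "g \<circ> inv g = id"
    using assms by (simp_all add: bij_is_inj bij_is_surj flip: surj_iff)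
  have conj_eq: "g \<circ> f \<circ> inv g = f' \<longleftrightarrow> g \<circ> f = f' \<circ> g" for f f'
  proof
    assume conj: "g \<circ> f \<circ> inv g = f'"
    have "g \<circ> f = g \<circ> f \<circ> inv g \<circ> g"
      by (simp add: comp_assoc inv_g)
    then show "g \<circ> f = f' \<circ> g"
      by (simp only: conj)
  next
    assume intertwine: "g \<circ> f = f' \<circ> g"
    have "g \<circ> f \<circ> inv g = f' \<circ> g \<circ> inv g"
      by (simp only: intertwine)
    also have "\<dots> = f'"
      by (simp add: comp_assoc inv_g)
    finally show "g \<circ> f \<circ> inv g = f'" .
  qed
  have "(\<lambda>f. g \<circ> f \<circ> inv g) ` G \<subseteq> G \<longleftrightarrow> (\<forall>f\<in>G. \<exists>f'\<in>G. g \<circ> f = f' \<circ> g)"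
    by (simp add: image_subset_iff flip: conj_eq)
  moreover have "f' \<in> (\<lambda>f. g \<circ> f \<circ> inv g) ` G \<longleftrightarrow> (\<exists>f\<in>G. g \<circ> f = f' \<circ> g)" for f'
    unfolding image_iff by (metis conj_eq)
  ultimately show ?thesis
    by blast
qed

lemma fun_eq_iff_2:
  "(f::real^2 \<Rightarrow> real^2) = g \<longleftrightarrow> (\<forall>x. f x $ 1 = g x $ 1 \<and> f x $ 2 = g x $ 2)"
  by (auto simp: fun_eq_iff vec_eq_iff forall_2)

lemma aff_nth [simp]:
  "aff b B x $ 1 = b$1 + B$1$1 * x$1 + B$1$2 * x$2"
  "aff b B x $ 2 = b$2 + B$2$1 * x$1 + B$2$2 * x$2"
  by (simp_all add: aff_def matrix_vector_mult_def sum_2)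

lemma bij_aff:
  assumes "invertible B"
  shows "bij (aff b B)"
proof -
  obtain B' where B': "B ** B' = mat 1" "B' ** B = mat 1"
    using assms unfolding invertible_def by blast
  show ?thesis
    by (rule o_bij[of "\<lambda>y. B' *v (y - b)"])
      (simp_all add: fun_eq_iff aff_def matrix_vector_mul_assoc B')
qed

definition diag_affine :: "real \<Rightarrow> real \<Rightarrow> real \<Rightarrow> real \<Rightarrow> real^2 \<Rightarrow> real^2" where
  "diag_affine p q c d = (\<lambda>x. vector [p * x$1 + c, q * x$2 + d])"

lemma diag_affine_nth [simp]:
  "diag_affine p q c d x $ 1 = p * x$1 + c"
  "diag_affine p q c d x $ 2 = q * x$2 + d"
  by (simp_all add: diag_affine_def)

lemma diag_affine_id: "diag_affine 1 1 0 0 = id"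
  by (simp add: fun_eq_iff_2)

lemma diag_affine_comp:
  "diag_affine p q c d \<circ> diag_affine p' q' c' d' = diag_affine (p * p') (q * q') (p * c' + c) (q * d' + d)"
  by (simp add: fun_eq_iff_2 algebra_simps)

lemma inv_diag_affine:
  assumes "p \<noteq> 0" "q \<noteq> 0"
  shows "inv (diag_affine p q c d) = diag_affine (1 / p) (1 / q) (- c / p) (- d / q)"
  by (rule inv_unique_comp) (use assms in \<open>simp_all add: diag_affine_comp field_simps diag_affine_id\<close>)

definition annulus_group :: "(real^2 \<Rightarrow> real^2) set" where
  "annulus_group = {diag_affine 1 s m n | s m n. s \<in> {1, -1} \<and> m \<in> \<int> \<and> n \<in> \<int>}"

lemma Mgrp_generators:
  "aff e1 (mat 1) = diag_affine 1 1 1 0"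
  "aff e2 (mat 1) = diag_affine 1 1 0 1"
  "aff 0 Amat = diag_affine 1 (-1) 0 0"
  by (simp_all add: fun_eq_iff_2 mat_def e1_def e2_def Amat_def axis_def)

lemma Mgrp_subset_annulus_group: "Mgrp \<subseteq> annulus_group"
  unfolding Mgrp_def
proof (rule gen_maps_subset)
  show "id \<in> annulus_group"
    unfolding annulus_group_def diag_affine_id[symmetric] by force
  show "{aff e1 (mat 1), aff e2 (mat 1), aff 0 Amat} \<subseteq> annulus_group"
    unfolding annulus_group_def Mgrp_generators by force
  show "g \<circ> h \<in> annulus_group" if "g \<in> annulus_group" "h \<in> annulus_group" for g h
    using that unfolding annulus_group_def by (force simp: diag_affine_comp)
  show "inv g \<in> annulus_group" if "g \<in> annulus_group" for g
    using that unfolding annulus_group_def by (force simp: inv_diag_affine)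
qed

lemma annulus_group_subset_Mgrp: "annulus_group \<subseteq> Mgrp"
proof
  fix f assume "f \<in> annulus_group"
  then obtain s k l where s: "s \<in> {1, -1}" and f: "f = diag_affine 1 s (of_int k) (of_int l)"
    unfolding annulus_group_def by (auto elim!: Ints_cases)
  have gen: "aff e1 (mat 1) \<in> Mgrp" "aff e2 (mat 1) \<in> Mgrp" "aff 0 Amat \<in> Mgrp"
    unfolding Mgrp_def by (simp_all add: gen_maps.gen_base)
  have "diag_affine 1 1 (of_int k) 0 \<in> Mgrp"
    unfolding Mgrp_def
  proof (rule one_parameter_in_gen_maps[where t = "\<lambda>a. diag_affine 1 1 a 0"])
    show "diag_affine 1 1 (a + b) 0 = diag_affine 1 1 a 0 \<circ> diag_affine 1 1 b 0" for a b :: real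
      by (simp add: diag_affine_comp add.commute)
  qed (use gen(1) in \<open>simp_all add: diag_affine_id Mgrp_def Mgrp_generators\<close>)
  moreover have "diag_affine 1 1 0 (of_int l) \<in> Mgrp"
    unfolding Mgrp_def
  proof (rule one_parameter_in_gen_maps[where t = "\<lambda>a. diag_affine 1 1 0 a"])
    show "diag_affine 1 1 0 (a + b) = diag_affine 1 1 0 a \<circ> diag_affine 1 1 0 b" for a b :: real
      by (simp add: diag_affine_comp add.commute)
  qed (use gen(2) in \<open>simp_all add: diag_affine_id Mgrp_def Mgrp_generators\<close>)
  moreover have "diag_affine 1 s 0 0 \<in> Mgrp"
    using s gen(3) gen_maps.gen_id unfolding Mgrp_generators Mgrp_def
    by (auto simp: diag_affine_id)
  ultimately have "diag_affine 1 1 (of_int k) 0 \<circ> (diag_affine 1 1 0 (of_int l) \<circ> diag_affine 1 s 0 0) \<in> Mgrp"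
    unfolding Mgrp_def by (blast intro: gen_maps.gen_comp)
  then show "f \<in> Mgrp"
    by (simp add: f diag_affine_comp)
qed

lemma Mgrp_eq_annulus_group: "Mgrp = annulus_group"
  using Mgrp_subset_annulus_group annulus_group_subset_Mgrp by blast

definition sign_diag_mats :: "(real^2^2) set" where
  "sign_diag_mats = {B. B$1$2 = 0 \<and> B$2$1 = 0 \<and> B$1$1 \<in> {1, -1} \<and> B$2$2 \<in> {1, -1}}"

lemma mat2_eq_iff:
  "(B::real^2^2) = C \<longleftrightarrow> B$1$1 = C$1$1 \<and> B$1$2 = C$1$2 \<and> B$2$1 = C$2$1 \<and> B$2$2 = C$2$2"
  by (auto simp: vec_eq_iff forall_2)

lemma matrix_mult_nth [simp]:
  fixes B C :: "real^2^2"
  shows "(B ** C)$1$1 = B$1$1 * C$1$1 + B$1$2 * C$2$1"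
    "(B ** C)$1$2 = B$1$1 * C$1$2 + B$1$2 * C$2$2"
    "(B ** C)$2$1 = B$2$1 * C$1$1 + B$2$2 * C$2$1"
    "(B ** C)$2$2 = B$2$1 * C$1$2 + B$2$2 * C$2$2"
  by (simp_all add: matrix_matrix_mult_def sum_2)

lemma sign_diag_mats_involution: "B \<in> sign_diag_mats \<Longrightarrow> B ** B = mat 1"
  unfolding sign_diag_mats_def by (auto simp: mat2_eq_iff mat_def)

lemma gen_mats_eq_sign_diag_mats: "gen_mats {- mat 1, Amat} = sign_diag_mats"
proof
  show "gen_mats {- mat 1, Amat} \<subseteq> sign_diag_mats"
  proof (rule gen_mats_subset)
    show "matrix_inv B \<in> sign_diag_mats" if "B \<in> sign_diag_mats" for B
      using that matrix_inv_unique sign_diag_mats_involution by metis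
    show "B ** C \<in> sign_diag_mats" if "B \<in> sign_diag_mats" "C \<in> sign_diag_mats" for B C
      using that unfolding sign_diag_mats_def by auto
  qed (auto simp: sign_diag_mats_def mat_def Amat_def)
  show "sign_diag_mats \<subseteq> gen_mats {- mat 1, Amat}"
  proof
    fix B assume "B \<in> sign_diag_mats"
    then consider "B = mat 1" | "B = - mat 1" | "B = Amat" | "B = - mat 1 ** Amat"
      unfolding sign_diag_mats_def by (auto simp: mat2_eq_iff mat_def Amat_def)
    then show "B \<in> gen_mats {- mat 1, Amat}"
      by cases (auto intro: gen_mats.intros)
  qed
qed

lemma aff_comp_diag_affine_eq_iff:
  "aff b B \<circ> diag_affine 1 s m n = diag_affine 1 s' m' n' \<circ> aff b B \<longleftrightarrow>
    B$1$2 * s = B$1$2 \<and> B$2$1 = s' * B$2$1 \<and> B$2$2 * s = s' * B$2$2 \<and>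
    m' = B$1$1 * m + B$1$2 * n \<and> n' = b$2 + B$2$1 * m + B$2$2 * n - s' * b$2"
  (is "?intertwine \<longleftrightarrow> ?coefficients")
proof
  assume ?intertwine
  then have "aff b B (diag_affine 1 s m n x) $ i = diag_affine 1 s' m' n' (aff b B x) $ i" for x i
    by (metis comp_apply)
  from this[of 0 1] this[of 0 2] this[of "vector [1, 0]" 2] this[of "vector [0, 1]" 1]
    this[of "vector [0, 1]" 2]
  show ?coefficients
    by (simp only: aff_nth diag_affine_nth vector_2 zero_index) algebra
next
  assume ?coefficients
  then show ?intertwine
    by (auto simp: fun_eq_iff_2 algebra_simps)
qed

lemma aff_sign_diag_normalizes_annulus_group:
  assumes B: "B \<in> sign_diag_mats" and b: "2 * b$2 \<in> \<int>"
  shows "(\<lambda>f. aff b B \<circ> f \<circ> inv (aff b B)) ` annulus_group = annulus_group"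
proof -
  have diag: "B$1$2 = 0" "B$2$1 = 0" and signs: "B$1$1 \<in> {1, -1}" "B$2$2 \<in> {1, -1}"
    using B unfolding sign_diag_mats_def by auto
  then have int_diag: "B$1$1 \<in> \<int>" "B$2$2 \<in> \<int>"
    by auto
  have "invertible B"
    using sign_diag_mats_involution[OF B] unfolding invertible_def by blast
  have shift: "(1 - s) * b$2 \<in> \<int>" if "s \<in> {1, -1}" for s
    using that b by auto
  show ?thesis
    unfolding conj_image_eq_iff_intertwining[OF bij_aff[OF \<open>invertible B\<close>]]
  proof (intro conjI ballI)
    fix f assume "f \<in> annulus_group"
    then obtain s m n where f: "f = diag_affine 1 s m n" and smn: "s \<in> {1, -1}" "m \<in> \<int>" "n \<in> \<int>"
      unfolding annulus_group_def by blast
    have "aff b B \<circ> f = diag_affine 1 s (B$1$1 * m) (B$2$2 * n + (1 - s) * b$2) \<circ> aff b B"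
      by (simp add: f aff_comp_diag_affine_eq_iff diag algebra_simps)
    moreover have "B$1$1 * m \<in> \<int>" "B$2$2 * n + (1 - s) * b$2 \<in> \<int>"
      using int_diag smn shift[OF smn(1)] by (simp_all add: Ints_mult Ints_add)
    ultimately show "\<exists>f'\<in>annulus_group. aff b B \<circ> f = f' \<circ> aff b B"
      using smn(1) unfolding annulus_group_def by blast
  next
    fix f' assume "f' \<in> annulus_group"
    then obtain s m n where f': "f' = diag_affine 1 s m n" and smn: "s \<in> {1, -1}" "m \<in> \<int>" "n \<in> \<int>"
      unfolding annulus_group_def by blast
    have "aff b B \<circ> diag_affine 1 s (B$1$1 * m) (B$2$2 * (n - (1 - s) * b$2)) = f' \<circ> aff b B"
      using signs by (auto simp: f' aff_comp_diag_affine_eq_iff diag algebra_simps)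
    moreover have "B$1$1 * m \<in> \<int>" "B$2$2 * (n - (1 - s) * b$2) \<in> \<int>"
      using int_diag smn shift[OF smn(1)] by (simp_all add: Ints_mult Ints_diff)
    ultimately show "\<exists>f\<in>annulus_group. aff b B \<circ> f = f' \<circ> aff b B"
      using smn(1) unfolding annulus_group_def by blast
  qed
qed

lemma normalizes_annulus_group_imp_sign_diag:
  assumes "invertible B"
    and normalizes: "(\<lambda>f. aff b B \<circ> f \<circ> inv (aff b B)) ` annulus_group = annulus_group"
  shows "B \<in> sign_diag_mats \<and> 2 * b$2 \<in> \<int>"
proof -
  have intertwining:
    "\<forall>f\<in>annulus_group. \<exists>f'\<in>annulus_group. aff b B \<circ> f = f' \<circ> aff b B"
    "\<forall>f'\<in>annulus_group. \<exists>f\<in>annulus_group. aff b B \<circ> f = f' \<circ> aff b B"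
    using normalizes conj_image_eq_iff_intertwining[OF bij_aff[OF \<open>invertible B\<close>]] by blast+
  have forward: "\<exists>s' m' n'. s' \<in> {1, -1} \<and> m' \<in> \<int> \<and> n' \<in> \<int> \<and>
      aff b B \<circ> diag_affine 1 s m n = diag_affine 1 s' m' n' \<circ> aff b B"
    if "s \<in> {1, -1}" "m \<in> \<int>" "n \<in> \<int>" for s m n
    using intertwining(1) that unfolding annulus_group_def by blast
  have backward: "\<exists>s m n. s \<in> {1, -1} \<and> m \<in> \<int> \<and> n \<in> \<int> \<and>
      aff b B \<circ> diag_affine 1 s m n = diag_affine 1 s' m' n' \<circ> aff b B"
    if "s' \<in> {1, -1}" "m' \<in> \<int>" "n' \<in> \<int>" for s' m' n'
    using intertwining(2) that unfolding annulus_group_def by blast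
  obtain s' n' where "n' \<in> \<int>" and reflection:
      "B$1$2 * -1 = B$1$2" "B$2$1 = s' * B$2$1" "B$2$2 * -1 = s' * B$2$2" "n' = b$2 - s' * b$2"
    using forward[of "-1" 0 0] unfolding aff_comp_diag_affine_eq_iff by auto
  have B12: "B$1$2 = 0"
    using reflection(1) by simp
  have B22: "B$2$2 \<noteq> 0"
    using \<open>invertible B\<close> B12 by (auto simp: invertible_det_nz det_2)
  then have "s' = -1"
    using reflection(3) by (metis mult.commute mult_cancel_left)
  then have B21: "B$2$1 = 0" and b2: "2 * b$2 \<in> \<int>"
    using reflection(2,4) \<open>n' \<in> \<int>\<close> by simp_all
  have B11_int: "B$1$1 \<in> \<int>"
    using forward[of 1 1 0] unfolding aff_comp_diag_affine_eq_iff by auto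
  have B22_int: "B$2$2 \<in> \<int>"
  proof -
    obtain s' m' n' where "n' \<in> \<int>"
      and "aff b B \<circ> diag_affine 1 1 0 1 = diag_affine 1 s' m' n' \<circ> aff b B"
      using forward[of 1 0 1] by auto
    then have "B$2$2 = s' * B$2$2" "n' = b$2 + B$2$2 - s' * b$2"
      using B21 unfolding aff_comp_diag_affine_eq_iff by simp_all
    with B22 \<open>n' \<in> \<int>\<close> show ?thesis
      by simp
  qed
  obtain m where m: "m \<in> \<int>" "B$1$1 * m = 1"
  proof -
    obtain s m n where "m \<in> \<int>"
      and "aff b B \<circ> diag_affine 1 s m n = diag_affine 1 1 1 0 \<circ> aff b B"
      using backward[of 1 1 0] by auto
    then show ?thesis
      using B12 that unfolding aff_comp_diag_affine_eq_iff by simp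
  qed
  obtain n where n: "n \<in> \<int>" "B$2$2 * n = 1"
  proof -
    obtain s m n where "n \<in> \<int>"
      and "aff b B \<circ> diag_affine 1 s m n = diag_affine 1 1 0 1 \<circ> aff b B"
      using backward[of 1 0 1] by auto
    then show ?thesis
      using B21 that unfolding aff_comp_diag_affine_eq_iff by simp
  qed
  show ?thesis
    using Ints_mult_eq_1[OF B11_int m] Ints_mult_eq_1[OF B22_int n] B12 B21 b2
    unfolding sign_diag_mats_def by blast
qed

theorem lemma17:
  shows "affine_normalizer Mgrp =
    {aff b B | b B. 2 * b $ 2 \<in> \<int> \<and> B \<in> gen_mats {- mat 1, Amat}}"
proof (intro set_eqI iffI)
  fix g assume "g \<in> affine_normalizer Mgrp"
  then obtain b B where "g = aff b B" "invertible B"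
    and "(\<lambda>f. aff b B \<circ> f \<circ> inv (aff b B)) ` annulus_group = annulus_group"
    unfolding affine_normalizer_def Aff2_def Mgrp_eq_annulus_group by blast
  then show "g \<in> {aff b B | b B. 2 * b $ 2 \<in> \<int> \<and> B \<in> gen_mats {- mat 1, Amat}}"
    using normalizes_annulus_group_imp_sign_diag gen_mats_eq_sign_diag_mats by blast
next
  fix g assume "g \<in> {aff b B | b B. 2 * b $ 2 \<in> \<int> \<and> B \<in> gen_mats {- mat 1, Amat}}"
  then obtain b B where "g = aff b B" "2 * b$2 \<in> \<int>" "B \<in> sign_diag_mats"
    unfolding gen_mats_eq_sign_diag_mats by blast
  moreover have "invertible B"
    using sign_diag_mats_involution[OF \<open>B \<in> sign_diag_mats\<close>] unfolding invertible_def by blast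
  ultimately show "g \<in> affine_normalizer Mgrp"
    unfolding affine_normalizer_def Aff2_def Mgrp_eq_annulus_group
    using aff_sign_diag_normalizes_annulus_group by blast
qed

end
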